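(* Let $\{G_i: i\in I\}$ be a family of (Hausdorff) topological groups and let $G=\prod_{i\in I}G_i$ be their product with the Tychonoff product topology. If $G$ is $g$-reversible, then every factor $G_i$ is $g$-reversible.
   Context: All topological groups are assumed Hausdorff. A topological group $G$ is called $g$-reversible if every continuous automorphism of $G$ (i.e. every continuous group isomorphism of $G$ onto itself) is an open map. *)

theory Defs
  imports "HOL-Analysis.Analysis" "HOL-Algebra.Product_Groups"
begin

definition topological_group :: "('a, 'b) monoid_scheme \<Rightarrow> 'a topology \<Rightarrow> bool" where
  "topological_group G T \<longleftrightarrow>
     group G \<and> topspace T = carrier G \<and> Hausdorff_space T \<and>
     continuous_map (prod_topology T T) T (\<lambda>(x, y). x \<otimes>\<^bsub>G\<^esub> y) \<and>
     continuous_map T T (\<lambda>x. inv\<^bsub>G\<^esub> x)"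

definition g_reversible :: "('a, 'b) monoid_scheme \<Rightarrow> 'a topology \<Rightarrow> bool" where
  "g_reversible G T \<longleftrightarrow>
     (\<forall>f. f \<in> iso G G \<and> continuous_map T T f \<longrightarrow> open_map T T f)"

end

theory Submission
  imports Defs
begin

text \<open>A continuous automorphism f of the factor G j extends to the continuous automorphism
  of the product that applies f in coordinate j and the identity elsewhere. By hypothesis this
  extension is open, and since the projection onto coordinate j is open and (all factors being
  nonempty) maps the extension of an open set U onto f ` U, the map f is open too.\<close>

definition map_component :: "'i set \<Rightarrow> 'i \<Rightarrow> ('a \<Rightarrow> 'a) \<Rightarrow> ('i \<Rightarrow> 'a) \<Rightarrow> 'i \<Rightarrow> 'a" where
  "map_component I j f x = (\<lambda>i\<in>I. if i = j then f (x i) else x i)"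

lemma map_component_in_PiE:
  assumes "x \<in> (\<Pi>\<^sub>E i\<in>I. A i)" and "f \<in> A j \<rightarrow> A j"
  shows "map_component I j f x \<in> (\<Pi>\<^sub>E i\<in>I. A i)"
  using assms by (auto simp: map_component_def PiE_iff)

lemma bij_betw_map_component:
  assumes "bij_betw f (A j) (A j)"
  shows "bij_betw (map_component I j f) (\<Pi>\<^sub>E i\<in>I. A i) (\<Pi>\<^sub>E i\<in>I. A i)"
proof (rule bij_betw_byWitness[where f' = "map_component I j (inv_into (A j) f)"])
  have "f \<in> A j \<rightarrow> A j" and "inv_into (A j) f \<in> A j \<rightarrow> A j"
    using assms bij_betw_imp_funcset bij_betw_inv_into by blast+
  then show "map_component I j f ` (\<Pi>\<^sub>E i\<in>I. A i) \<subseteq> (\<Pi>\<^sub>E i\<in>I. A i)"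
    and "map_component I j (inv_into (A j) f) ` (\<Pi>\<^sub>E i\<in>I. A i) \<subseteq> (\<Pi>\<^sub>E i\<in>I. A i)"
    by (auto intro!: image_subsetI map_component_in_PiE simp del: PiE_iff)
  show "\<forall>x\<in>\<Pi>\<^sub>E i\<in>I. A i. map_component I j (inv_into (A j) f) (map_component I j f x) = x"
    using bij_betw_inv_into_left[OF assms]
    by (auto simp: map_component_def PiE_iff extensional_def fun_eq_iff)
  show "\<forall>x\<in>\<Pi>\<^sub>E i\<in>I. A i. map_component I j f (map_component I j (inv_into (A j) f) x) = x"
    using bij_betw_inv_into_right[OF assms]
    by (auto simp: map_component_def PiE_iff extensional_def fun_eq_iff)
qed

lemma iso_map_component_product_group:
  assumes "f \<in> iso (G j) (G j)"
  shows "map_component I j f \<in> iso (product_group I G) (product_group I G)"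
proof -
  have f_hom: "f \<in> hom (G j) (G j)" and f_bij: "bij_betw f (carrier (G j)) (carrier (G j))"
    using assms by (auto simp: iso_def)
  have "map_component I j f \<in> hom (product_group I G) (product_group I G)"
  proof (rule homI)
    fix x assume "x \<in> carrier (product_group I G)"
    moreover have "f \<in> carrier (G j) \<rightarrow> carrier (G j)"
      using f_hom by (simp add: hom_def)
    ultimately show "map_component I j f x \<in> carrier (product_group I G)"
      using map_component_in_PiE[where A = "\<lambda>i. carrier (G i)"] by simp
  next
    fix x y assume "x \<in> carrier (product_group I G)" "y \<in> carrier (product_group I G)"
    then show "map_component I j f (x \<otimes>\<^bsub>product_group I G\<^esub> y)
               = map_component I j f x \<otimes>\<^bsub>product_group I G\<^esub> map_component I j f y"
      using f_hom by (auto simp: map_component_def hom_mult PiE_iff)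
  qed
  moreover have "bij_betw (map_component I j f) (carrier (product_group I G)) (carrier (product_group I G))"
    using bij_betw_map_component[where A = "\<lambda>i. carrier (G i)", OF f_bij] by simp
  ultimately show ?thesis by (simp add: iso_def)
qed

lemma continuous_map_map_component:
  assumes "j \<in> I" and "continuous_map (T j) (T j) f"
  shows "continuous_map (product_topology T I) (product_topology T I) (map_component I j f)"
  unfolding continuous_map_componentwise
proof (intro conjI ballI)
  show "map_component I j f ` topspace (product_topology T I) \<subseteq> extensional I"
    by (auto simp: map_component_def)
  fix k assume "k \<in> I"
  have "continuous_map (product_topology T I) (T k) (\<lambda>x. if k = j then f (x k) else x k)"
  proof (cases "k = j")
    case True
    then show ?thesis
      using continuous_map_compose[OF continuous_map_product_projection[OF \<open>j \<in> I\<close>, of T] assms(2)]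
      by (simp add: o_def)
  qed (simp add: \<open>k \<in> I\<close> continuous_map_product_projection)
  then show "continuous_map (product_topology T I) (T k) (\<lambda>x. map_component I j f x k)"
    using \<open>k \<in> I\<close> by (simp add: map_component_def)
qed

lemma open_map_from_map_component:
  assumes "j \<in> I" and nonempty: "\<And>i. i \<in> I \<Longrightarrow> topspace (T i) \<noteq> {}"
    and open_F: "open_map (product_topology T I) (product_topology T I) (map_component I j f)"
  shows "open_map (T j) (T j) f"
  unfolding open_map_def
proof (intro allI impI)
  fix U assume U: "openin (T j) U"
  define V where "V = {x \<in> topspace (product_topology T I). x j \<in> U}"
  have "openin (product_topology T I) V"
    unfolding V_def using continuous_map_product_projection[OF \<open>j \<in> I\<close>] U
    by (rule openin_continuous_map_preimage)
  then have "openin (product_topology T I) (map_component I j f ` V)"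
    using open_F by (simp add: open_map_def)
  then have "openin (T j) ((\<lambda>x. x j) ` map_component I j f ` V)"
    using open_map_product_projection[OF \<open>j \<in> I\<close>, of T] by (simp add: open_map_def)
  moreover have "(\<lambda>x. x j) ` map_component I j f ` V = f ` U"
  proof
    show "(\<lambda>x. x j) ` map_component I j f ` V \<subseteq> f ` U"
      using \<open>j \<in> I\<close> by (auto simp: V_def map_component_def)
    show "f ` U \<subseteq> (\<lambda>x. x j) ` map_component I j f ` V"
    proof
      fix z assume "z \<in> f ` U"
      then obtain u where "u \<in> U" "z = f u" by auto
      define x where "x = (\<lambda>i\<in>I. if i = j then u else SOME a. a \<in> topspace (T i))"
      have "x \<in> V"
        using \<open>u \<in> U\<close> openin_subset[OF U] nonempty \<open>j \<in> I\<close>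
        by (auto simp: V_def x_def PiE_iff some_in_eq)
      moreover have "map_component I j f x j = z"
        using \<open>j \<in> I\<close> \<open>z = f u\<close> by (simp add: map_component_def x_def)
      ultimately show "z \<in> (\<lambda>x. x j) ` map_component I j f ` V" by force
    qed
  qed
  ultimately show "openin (T j) (f ` U)" by simp
qed

theorem theorem9p1:
  fixes I :: "'i set"
    and G :: "'i \<Rightarrow> ('a, 'b) monoid_scheme"
    and T :: "'i \<Rightarrow> 'a topology"
  assumes "\<forall>i\<in>I. topological_group (G i) (T i)"
    and "g_reversible (product_group I G) (product_topology T I)"
  shows "\<forall>i\<in>I. g_reversible (G i) (T i)"
  unfolding g_reversible_def
proof (intro ballI allI impI)
  fix j f assume "j \<in> I" and f: "f \<in> iso (G j) (G j) \<and> continuous_map (T j) (T j) f"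
  have nonempty: "topspace (T i) \<noteq> {}" if "i \<in> I" for i
    using assms(1) that group.is_monoid monoid.one_closed
    by (fastforce simp: topological_group_def)
  have "open_map (product_topology T I) (product_topology T I) (map_component I j f)"
    using assms(2) f iso_map_component_product_group[of f G j I]
      continuous_map_map_component[OF \<open>j \<in> I\<close>, of T f]
    by (auto simp: g_reversible_def)
  then show "open_map (T j) (T j) f"
    using open_map_from_map_component[of j I T f] \<open>j \<in> I\<close> nonempty by blast
qed

end
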